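(* Let $\mathbf M=(m_1,\dots,m_r)$ be a Motzkin path and suppose the seed $(\mathbf x,B)$ is obtained from $(\mathbf x_0,B_0)$ by a finite sequence of $Q$-system mutations, each intermediate cluster being of the form $\mathbf x_{\mathbf M'}$ for a Motzkin path $\mathbf M'$, and the final cluster being $\mathbf x_{\mathbf M}$. Then $B=B(\mathbf M)$ where, for $1\le i,j\le r$ and with $C$ the Cartan matrix of $A_r$, $$B(\mathbf M)_{i,j}=(-1)^{\lfloor\frac{m_j+1}{2}\rfloor}\Bigl((-1)^{\lfloor\frac{m_i}{2}\rfloor}-(-1)^{\lfloor\frac{m_j}{2}\rfloor}\Bigr)\delta_{|i-j|,1},$$ $$B(\mathbf M)_{i,j+r}=(-1)^{\lfloor\frac{m_i+1}{2}\rfloor+\lfloor\frac{m_j}{2}\rfloor+1}C_{i,j},\qquad B(\mathbf M)_{i+r,j}=(-1)^{\lfloor\frac{m_i}{2}\rfloor+\lfloor\frac{m_j+1}{2}\rfloor}C_{i,j},$$ $$B(\mathbf M)_{i+r,j+r}=(-1)^{\lfloor\frac{m_i}{2}\rfloor}\Bigl((-1)^{\lfloor\frac{m_j+1}{2}\rfloor}-(-1)^{\lfloor\frac{m_i+1}{2}\rfloor}\Bigr)\delta_{|i-j|,1}.$$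
   Context: Fix $r\ge1$, $I_r=\{1,\dots,r\}$, and let $(R_{\alpha,n})_{0\le\alpha\le r+1,n\in\mathbb Z}$ be the $A_r$ $Q$-system: $R_{1,0},\dots,R_{r,0},R_{1,1},\dots,R_{r,1}$ are algebraically independent indeterminates, $R_{0,n}=R_{r+1,n}=1$, and $R_{\alpha,n+1}R_{\alpha,n-1}=R_{\alpha,n}^2+R_{\alpha+1,n}R_{\alpha-1,n}$. $C$ is the $r\times r$ Cartan matrix of $A_r$ ($C_{ii}=2$, $C_{ij}=-1$ if $|i-j|=1$, $0$ otherwise). Cluster algebra conventions (rank $2r$, no coefficients): a seed is a pair $(\mathbf x,B)$ with $\mathbf x=(x_1,\dots,x_{2r})$ and $B$ a skew-symmetric integer $2r\times 2r$ matrix. The mutation $\mu_k$ replaces $x_k$ by $x_k'=x_k^{-1}\bigl(\prod_i x_i^{[B_{ik}]_+}+\prod_i x_i^{[-B_{ik}]_+}\bigr)$ ($[n]_+=\max(n,0)$), leaves other $x_j$ unchanged, and replaces $B$ by $B'$ with $B'_{ij}=-B_{ij}$ if $i=k$ or $j=k$, and $B'_{ij}=B_{ij}+\mathrm{sign}(B_{ik})[B_{ik}B_{kj}]_+$ otherwise. The initial seed is $\mathbf x_0=(R_{1,0},\dots,R_{r,0},R_{1,1},\dots,R_{r,1})$, $B_0=\begin{pmatrix}0&-C\\ C&0\end{pmatrix}$ (so $(B_0)_{i,j+r}=-C_{ij}$, $(B_0)_{i+r,j}=C_{ij}$). A Motzkin path is $\mathbf M=(m_1,\dots,m_r)\in\mathbb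 Z^r$ with $|m_{\alpha+1}-m_\alpha|\le1$ for $1\le\alpha<r$. Its cluster $\mathbf x_{\mathbf M}=(x_1,\dots,x_{2r})$ is defined by: for $\alpha\in I_r$, $x_\alpha$ is whichever of $R_{\alpha,m_\alpha},R_{\alpha,m_\alpha+1}$ has even second index and $x_{\alpha+r}$ is the one with odd second index (so $\mathbf x_{(0,\dots,0)}=\mathbf x_0$). A $Q$-system mutation is a mutation $\mu_k$ ($k=\alpha$ or $k=\alpha+r$) replacing a cluster entry $R_{\alpha,n\mp1}$ by $R_{\alpha,n\pm1}$, i.e. one that changes one $m_\alpha$ by $\pm1$. *)

theory Defs
  imports Main "HOL-Library.Poly_Mapping"
begin

text \<open>Polynomials with integer coefficients in variables indexed by nat:
  a finitely supported map from monomials (finitely supported exponent vectors)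
  to integer coefficients; evaluated at a family of field elements.\<close>

definition int_poly_eval :: "((nat \<Rightarrow>\<^sub>0 nat) \<Rightarrow>\<^sub>0 int) \<Rightarrow> (nat \<Rightarrow> 'a::field) \<Rightarrow> 'a" where
  "int_poly_eval p v =
     (\<Sum>m\<in>Poly_Mapping.keys p. of_int (Poly_Mapping.lookup p m) *
        (\<Prod>i\<in>Poly_Mapping.keys m. v i ^ Poly_Mapping.lookup m i))"

definition alg_indep :: "nat set \<Rightarrow> (nat \<Rightarrow> 'a::field) \<Rightarrow> bool" where
  "alg_indep I v \<longleftrightarrow>
     (\<forall>p. (\<forall>m\<in>Poly_Mapping.keys p. Poly_Mapping.keys m \<subseteq> I) \<longrightarrow>
          int_poly_eval p v = 0 \<longrightarrow> p = 0)"

definition is_Q_system :: "nat \<Rightarrow> (nat \<Rightarrow> int \<Rightarrow> 'a::field) \<Rightarrow> bool" where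
  "is_Q_system r R \<longleftrightarrow>
     (\<forall>n. R 0 n = 1 \<and> R (r + 1) n = 1) \<and>
     (\<forall>\<alpha>\<in>{1..r}. \<forall>n. R \<alpha> (n + 1) * R \<alpha> (n - 1) = (R \<alpha> n)^2 + R (\<alpha> + 1) n * R (\<alpha> - 1) n)"

definition cartan :: "nat \<Rightarrow> nat \<Rightarrow> int" where
  "cartan i j = (if i = j then 2 else if i = j + 1 \<or> j = i + 1 then -1 else 0)"

definition B0 :: "nat \<Rightarrow> nat \<Rightarrow> nat \<Rightarrow> int" where
  "B0 r i j =
     (if i \<le> r \<and> j \<le> r then 0
      else if i \<le> r \<and> r < j then - cartan i (j - r)
      else if r < i \<and> j \<le> r then cartan (i - r) j
      else 0)"

text \<open>Motzkin paths M = (m_1,...,m_r), stored as a function on indices 1..r.\<close>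

definition motzkin :: "nat \<Rightarrow> (nat \<Rightarrow> int) \<Rightarrow> bool" where
  "motzkin r M \<longleftrightarrow> (\<forall>\<alpha>. 1 \<le> \<alpha> \<and> \<alpha> < r \<longrightarrow> \<bar>M (\<alpha> + 1) - M \<alpha>\<bar> \<le> 1)"

definition motzkin_cluster :: "nat \<Rightarrow> (nat \<Rightarrow> int \<Rightarrow> 'a) \<Rightarrow> (nat \<Rightarrow> int) \<Rightarrow> nat \<Rightarrow> 'a" where
  "motzkin_cluster r R M i =
     (if i \<le> r then (if even (M i) then R i (M i) else R i (M i + 1))
      else (if odd (M (i - r)) then R (i - r) (M (i - r)) else R (i - r) (M (i - r) + 1)))"

definition mutate_x :: "nat \<Rightarrow> (nat \<Rightarrow> nat \<Rightarrow> int) \<Rightarrow> nat \<Rightarrow> (nat \<Rightarrow> 'a::field) \<Rightarrow> nat \<Rightarrow> 'a" where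
  "mutate_x r B k x = x(k :=
     ((\<Prod>i\<in>{1..2*r}. x i ^ nat (max (B i k) 0)) + (\<Prod>i\<in>{1..2*r}. x i ^ nat (max (- B i k) 0))) / x k)"

definition mutate_B :: "nat \<Rightarrow> (nat \<Rightarrow> nat \<Rightarrow> int) \<Rightarrow> nat \<Rightarrow> nat \<Rightarrow> int" where
  "mutate_B k B i j =
     (if i = k \<or> j = k then - B i j
      else B i j + sgn (B i k) * max (B i k * B k j) 0)"

definition Q_mutation_step :: "nat \<Rightarrow> (nat \<Rightarrow> int) \<Rightarrow> (nat \<Rightarrow> int) \<Rightarrow> nat \<Rightarrow> bool" where
  "Q_mutation_step r M M' k \<longleftrightarrow>
     (\<exists>\<alpha>\<in>{1..r}. \<exists>e\<in>{1, -1}.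
        (\<forall>\<beta>\<in>{1..r}. M' \<beta> = (if \<beta> = \<alpha> then M \<alpha> + e else M \<beta>)) \<and>
        (k = \<alpha> \<or> k = \<alpha> + r))"

definition neg1pow :: "int \<Rightarrow> int" where
  "neg1pow k = (if even k then 1 else -1)"

definition kdelta1 :: "nat \<Rightarrow> nat \<Rightarrow> int" where
  "kdelta1 i j = (if i = j + 1 \<or> j = i + 1 then 1 else 0)"

text \<open>The matrix B(M) (indices 1..2r); floor((m+1)/2) = (m+1) div 2 on int.\<close>

definition B_of_M :: "nat \<Rightarrow> (nat \<Rightarrow> int) \<Rightarrow> nat \<Rightarrow> nat \<Rightarrow> int" where
  "B_of_M r M p q =
     (if p \<le> r \<and> q \<le> r then
        (let i = p; j = q in
          neg1pow ((M j + 1) div 2) * (neg1pow (M i div 2) - neg1pow (M j div 2)) * kdelta1 i j)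
      else if p \<le> r \<and> r < q then
        (let i = p; j = q - r in
          neg1pow ((M i + 1) div 2 + M j div 2 + 1) * cartan i j)
      else if r < p \<and> q \<le> r then
        (let i = p - r; j = q in
          neg1pow (M i div 2 + (M j + 1) div 2) * cartan i j)
      else
        (let i = p - r; j = q - r in
          neg1pow (M i div 2) * (neg1pow ((M j + 1) div 2) - neg1pow ((M i + 1) div 2)) * kdelta1 i j))"

end

theory Submission
  imports Defs "HOL.Rat"
begin

(*
  The theorem has an algebraic and a combinatorial half.

  Algebraic half: the mutated index k of a Q-system mutation is forced.  Moving m_alpha by
  e = +-1 replaces, in one of the two slots alpha, alpha + r of the cluster, some R_{alpha,a}
  by R_{alpha,a+2e}; these differ because R_{alpha,-} is injective on each parity class.  To
  prove that, we specialize the algebraically independent initial cluster to (1,...,1): every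
  R_{alpha,n} is a subtraction-free rational function of it, so it specializes to a positive
  rational S_{alpha,n}, and S is a positive Q-system solution with S_{alpha,0} = S_{alpha,1},
  which is symmetric under n -> 1 - n and strictly increasing for n >= 1.

  Combinatorial half: writing B(M) as a "sign matrix" of the sign vectors
  f = (-1)^floor(m/2) and g = (-1)^floor((m+1)/2), a direct finite case analysis shows that
  mutating B(M) at the forced index gives B(M') (raising m_alpha; lowering is the inverse move).

  The theorem then follows by induction along the mutation sequence, using that the cluster
  x_M determines M (for the initial and the final path).
*)

section \<open>Evaluation of integer polynomials is a ring homomorphism\<close>

type_synonym int_poly = "(nat \<Rightarrow>\<^sub>0 nat) \<Rightarrow>\<^sub>0 int"

definition monomial_eval :: "(nat \<Rightarrow>\<^sub>0 nat) \<Rightarrow> (nat \<Rightarrow> 'a::field) \<Rightarrow> 'a" where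
  "monomial_eval m v = (\<Prod>i\<in>Poly_Mapping.keys m. v i ^ Poly_Mapping.lookup m i)"

text \<open>Products and sums over the support may be taken over any finite superset; this lets us
  compare evaluations of different polynomials over a common index set.\<close>

lemma monomial_eval_superset:
  assumes "finite K" "Poly_Mapping.keys m \<subseteq> K"
  shows "monomial_eval m v = (\<Prod>i\<in>K. v i ^ Poly_Mapping.lookup m i)"
  unfolding monomial_eval_def using assms
  by (intro prod.mono_neutral_left) (auto simp: in_keys_iff)

lemma monomial_eval_add: "monomial_eval (a + b) v = monomial_eval a v * monomial_eval b v"
proof -
  let ?K = "Poly_Mapping.keys a \<union> Poly_Mapping.keys b"
  have "monomial_eval (a + b) v = (\<Prod>i\<in>?K. v i ^ Poly_Mapping.lookup (a + b) i)"
    by (rule monomial_eval_superset) (simp_all add: keys_add)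
  also have "\<dots> = (\<Prod>i\<in>?K. v i ^ Poly_Mapping.lookup a i * v i ^ Poly_Mapping.lookup b i)"
    by (simp add: lookup_add power_add)
  also have "\<dots> = monomial_eval a v * monomial_eval b v"
    by (simp add: prod.distrib monomial_eval_superset[of ?K])
  finally show ?thesis .
qed

lemma monomial_eval_var: "monomial_eval (Poly_Mapping.single i 1) v = v i"
  by (simp add: monomial_eval_def)

lemma int_poly_eval_superset:
  assumes "finite K" "Poly_Mapping.keys p \<subseteq> K"
  shows "int_poly_eval p v = (\<Sum>m\<in>K. of_int (Poly_Mapping.lookup p m) * monomial_eval m v)"
  unfolding int_poly_eval_def monomial_eval_def[symmetric] using assms
  by (intro sum.mono_neutral_left) (auto simp: in_keys_iff)

lemma int_poly_eval_zero [simp]: "int_poly_eval 0 v = 0"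
  by (simp add: int_poly_eval_def)

lemma int_poly_eval_one [simp]: "int_poly_eval 1 v = 1"
  by (simp add: int_poly_eval_def lookup_one)

lemma int_poly_eval_single: "int_poly_eval (Poly_Mapping.single a b) v = of_int b * monomial_eval a v"
  by (simp add: int_poly_eval_def monomial_eval_def)

lemma int_poly_eval_add: "int_poly_eval (p + q) v = int_poly_eval p v + int_poly_eval q v"
proof -
  let ?K = "Poly_Mapping.keys p \<union> Poly_Mapping.keys q"
  have "int_poly_eval (p + q) v = (\<Sum>m\<in>?K. of_int (Poly_Mapping.lookup (p + q) m) * monomial_eval m v)"
    by (rule int_poly_eval_superset) (simp_all add: keys_add)
  also have "\<dots> = (\<Sum>m\<in>?K. of_int (Poly_Mapping.lookup p m) * monomial_eval m v
                           + of_int (Poly_Mapping.lookup q m) * monomial_eval m v)"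
    by (simp add: lookup_add distrib_right)
  also have "\<dots> = int_poly_eval p v + int_poly_eval q v"
    by (simp add: sum.distrib int_poly_eval_superset[of ?K])
  finally show ?thesis .
qed

lemma int_poly_eval_diff: "int_poly_eval (p - q) v = int_poly_eval p v - int_poly_eval q v"
proof -
  have "int_poly_eval (- q) v = - int_poly_eval q v"
    by (simp add: int_poly_eval_superset[of "Poly_Mapping.keys q"] sum_negf)
  then show ?thesis
    unfolding diff_conv_add_uminus int_poly_eval_add by simp
qed

text \<open>Polynomials are generated by monomials via \<open>update_induct\<close>; adding a fresh monomial
  is ordinary addition.\<close>

lemma update_fresh: "a \<notin> Poly_Mapping.keys f \<Longrightarrow> Poly_Mapping.update a b f = f + Poly_Mapping.single a b"
  by (rule poly_mapping_eqI) (auto simp: lookup_update lookup_add lookup_single in_keys_iff when_def)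

lemma int_poly_eval_mult_single:
  "int_poly_eval (Poly_Mapping.single a b * q) v = of_int b * monomial_eval a v * int_poly_eval q v"
proof (induction q rule: update_induct)
  case const
  then show ?case by simp
next
  case (update f c d)
  have split: "Poly_Mapping.update c d f = f + Poly_Mapping.single c d"
    using update_fresh[OF update(1)] .
  have "int_poly_eval (Poly_Mapping.single a b * Poly_Mapping.update c d f) v
      = int_poly_eval (Poly_Mapping.single a b * f) v
        + int_poly_eval (Poly_Mapping.single (a + c) (b * d)) v"
    unfolding split distrib_left mult_single int_poly_eval_add ..
  also have "\<dots> = of_int b * monomial_eval a v * int_poly_eval (Poly_Mapping.update c d f) v"
    unfolding update(3) split int_poly_eval_add int_poly_eval_single monomial_eval_add
    by (simp add: algebra_simps)
  finally show ?case .
qed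

lemma int_poly_eval_mult: "int_poly_eval (p * q) v = int_poly_eval p v * int_poly_eval q v"
proof (induction p rule: update_induct)
  case const
  then show ?case by simp
next
  case (update f c d)
  show ?case
    unfolding update_fresh[OF update(1)] distrib_right int_poly_eval_add
      int_poly_eval_mult_single update(3) int_poly_eval_single
    by simp
qed

definition vars_in :: "nat set \<Rightarrow> int_poly \<Rightarrow> bool" where
  "vars_in I p \<longleftrightarrow> (\<forall>m\<in>Poly_Mapping.keys p. Poly_Mapping.keys m \<subseteq> I)"

lemma vars_in_add: "vars_in I p \<Longrightarrow> vars_in I q \<Longrightarrow> vars_in I (p + q)"
  unfolding vars_in_def using keys_add[of p q] by blast

lemma vars_in_diff: "vars_in I p \<Longrightarrow> vars_in I q \<Longrightarrow> vars_in I (p - q)"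
  unfolding diff_conv_add_uminus by (rule vars_in_add) (simp_all add: vars_in_def)

lemma vars_in_mult: "vars_in I p \<Longrightarrow> vars_in I q \<Longrightarrow> vars_in I (p * q)"
  unfolding vars_in_def
proof
  fix m assume p: "\<forall>m\<in>Poly_Mapping.keys p. Poly_Mapping.keys m \<subseteq> I"
    and q: "\<forall>m\<in>Poly_Mapping.keys q. Poly_Mapping.keys m \<subseteq> I"
    and m: "m \<in> Poly_Mapping.keys (p * q)"
  then obtain a b where "m = a + b" "a \<in> Poly_Mapping.keys p" "b \<in> Poly_Mapping.keys q"
    using keys_mult[of p q] by blast
  then show "Poly_Mapping.keys m \<subseteq> I"
    using p q keys_add[of a b] by blast
qed

lemma vars_in_one: "vars_in I 1"
  by (simp add: vars_in_def)

lemma vars_in_var: "i \<in> I \<Longrightarrow> vars_in I (Poly_Mapping.single (Poly_Mapping.single i 1) 1)"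
  by (simp add: vars_in_def)

lemma alg_indep_eval_eq_0:
  "alg_indep I x \<Longrightarrow> vars_in I q \<Longrightarrow> int_poly_eval q x = 0 \<Longrightarrow> q = 0"
  unfolding alg_indep_def vars_in_def by blast

section \<open>Specialising rational functions of algebraically independent elements\<close>

text \<open>Arithmetic of fractions \<open>y = p(v)/q(v)\<close>, written without division.\<close>

lemma fraction_add:
  assumes "y * int_poly_eval q v = int_poly_eval p v" "y' * int_poly_eval q' v = int_poly_eval p' v"
  shows "(y + y') * int_poly_eval (q * q') v = int_poly_eval (p * q' + p' * q) v"
  using assms by (simp add: int_poly_eval_mult int_poly_eval_add algebra_simps)

lemma fraction_mult:
  assumes "y * int_poly_eval q v = int_poly_eval p v" "y' * int_poly_eval q' v = int_poly_eval p' v"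
  shows "(y * y') * int_poly_eval (q * q') v = int_poly_eval (p * p') v"
  using assms by (simp add: int_poly_eval_mult algebra_simps)

lemma fraction_div:
  assumes "y * int_poly_eval q v = int_poly_eval p v" "y' * int_poly_eval q' v = int_poly_eval p' v"
    and "y' \<noteq> 0"
  shows "(y / y') * int_poly_eval (q * p') v = int_poly_eval (p * q') v"
  using assms by (simp add: int_poly_eval_mult field_simps flip: assms(2))

abbreviation at_ones :: "int_poly \<Rightarrow> rat" where
  "at_ones p \<equiv> int_poly_eval p (\<lambda>_. 1)"

text \<open>When \<open>x\<close> is algebraically independent this is a well-defined partial ring homomorphism.\<close>

definition specializes :: "nat set \<Rightarrow> (nat \<Rightarrow> 'a::field) \<Rightarrow> 'a \<Rightarrow> rat \<Rightarrow> bool" where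
  "specializes I x y s \<longleftrightarrow>
     (\<exists>p q. vars_in I p \<and> vars_in I q \<and> at_ones q \<noteq> 0 \<and>
        y * int_poly_eval q x = int_poly_eval p x \<and> s * at_ones q = at_ones p)"

lemma specializes_one: "specializes I x 1 1"
  unfolding specializes_def by (rule exI[of _ 1], rule exI[of _ 1]) (simp add: vars_in_one)

lemma specializes_var: "i \<in> I \<Longrightarrow> specializes I x (x i) 1"
  unfolding specializes_def
  by (rule exI[of _ "Poly_Mapping.single (Poly_Mapping.single i 1) 1"], rule exI[of _ 1])
     (simp add: vars_in_var vars_in_one int_poly_eval_single monomial_eval_var del: One_nat_def)

lemma specializes_add:
  assumes "specializes I x y s" "specializes I x y' s'"
  shows "specializes I x (y + y') (s + s')"
proof -
  obtain p q p' q' where h: "vars_in I p" "vars_in I q" "at_ones q \<noteq> 0"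
      "y * int_poly_eval q x = int_poly_eval p x" "s * at_ones q = at_ones p"
    and h': "vars_in I p'" "vars_in I q'" "at_ones q' \<noteq> 0"
      "y' * int_poly_eval q' x = int_poly_eval p' x" "s' * at_ones q' = at_ones p'"
    using assms unfolding specializes_def by blast
  show ?thesis unfolding specializes_def
    by (rule exI[of _ "p * q' + p' * q"], rule exI[of _ "q * q'"])
       (intro conjI vars_in_add vars_in_mult h h' fraction_add; simp add: h h' int_poly_eval_mult)
qed

lemma specializes_mult:
  assumes "specializes I x y s" "specializes I x y' s'"
  shows "specializes I x (y * y') (s * s')"
proof -
  obtain p q p' q' where h: "vars_in I p" "vars_in I q" "at_ones q \<noteq> 0"
      "y * int_poly_eval q x = int_poly_eval p x" "s * at_ones q = at_ones p"
    and h': "vars_in I p'" "vars_in I q'" "at_ones q' \<noteq> 0"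
      "y' * int_poly_eval q' x = int_poly_eval p' x" "s' * at_ones q' = at_ones p'"
    using assms unfolding specializes_def by blast
  show ?thesis unfolding specializes_def
    by (rule exI[of _ "p * p'"], rule exI[of _ "q * q'"])
       (intro conjI vars_in_mult h h' fraction_mult; simp add: h h' int_poly_eval_mult)
qed

text \<open>An element with nonzero specialization is nonzero: its numerator is a nonzero polynomial.\<close>

lemma specializes_nonzero:
  assumes indep: "alg_indep I x" and spec: "specializes I x y s" and "s \<noteq> 0"
  shows "y \<noteq> 0"
proof -
  obtain p q where p: "vars_in I p" and "at_ones q \<noteq> 0"
      "y * int_poly_eval q x = int_poly_eval p x" "s * at_ones q = at_ones p"
    using spec unfolding specializes_def by blast
  then have "at_ones p \<noteq> 0" using \<open>s \<noteq> 0\<close> by auto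
  then have "p \<noteq> 0" by auto
  then have "int_poly_eval p x \<noteq> 0" using alg_indep_eval_eq_0[OF indep p] by blast
  then show "y \<noteq> 0" using \<open>y * int_poly_eval q x = int_poly_eval p x\<close> by auto
qed

lemma specializes_div:
  assumes indep: "alg_indep I x" and "specializes I x y s" "specializes I x y' s'" "s' \<noteq> 0"
  shows "specializes I x (y / y') (s / s')"
proof -
  have "y' \<noteq> 0" using specializes_nonzero[OF indep] assms(3,4) .
  obtain p q p' q' where h: "vars_in I p" "vars_in I q" "at_ones q \<noteq> 0"
      "y * int_poly_eval q x = int_poly_eval p x" "s * at_ones q = at_ones p"
    and h': "vars_in I p'" "vars_in I q'" "at_ones q' \<noteq> 0"
      "y' * int_poly_eval q' x = int_poly_eval p' x" "s' * at_ones q' = at_ones p'"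
    using assms(2,3) unfolding specializes_def by blast
  have "at_ones p' \<noteq> 0" using h'(3,5) \<open>s' \<noteq> 0\<close> by auto
  with h(3) have "at_ones (q * p') \<noteq> 0" by (simp add: int_poly_eval_mult)
  with h h' \<open>y' \<noteq> 0\<close> \<open>s' \<noteq> 0\<close> show ?thesis unfolding specializes_def
    by (blast intro: vars_in_mult fraction_div)
qed

text \<open>Algebraic independence makes the specialization well defined: if \<open>p/q = p'/q'\<close> at \<open>x\<close>, then
  \<open>p q' = p' q\<close> as polynomials, hence also at \<open>(1, 1, \<dots>)\<close>.\<close>

lemma specializes_unique:
  assumes indep: "alg_indep I x" and "specializes I x y s" "specializes I x y s'"
  shows "s = s'"
proof -
  obtain p q p' q' where "vars_in I p" "vars_in I q" "at_ones q \<noteq> 0"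
      and y: "y * int_poly_eval q x = int_poly_eval p x" and s: "s * at_ones q = at_ones p"
    and "vars_in I p'" "vars_in I q'" "at_ones q' \<noteq> 0"
      and y': "y * int_poly_eval q' x = int_poly_eval p' x" and s': "s' * at_ones q' = at_ones p'"
    using assms(2,3) unfolding specializes_def by blast
  have "int_poly_eval (p * q' - p' * q) x = 0"
    by (simp add: int_poly_eval_diff int_poly_eval_mult flip: y y')
  then have "p * q' - p' * q = 0"
    by (rule alg_indep_eval_eq_0[OF indep, rotated])
       (intro vars_in_diff vars_in_mult; fact)
  then have "at_ones (p * q' - p' * q) = 0" by simp
  then have "(s - s') * (at_ones q * at_ones q') = 0"
    by (simp add: int_poly_eval_diff int_poly_eval_mult algebra_simps flip: s s')
  then show "s = s'" using \<open>at_ones q \<noteq> 0\<close> \<open>at_ones q' \<noteq> 0\<close> by simp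
qed

text \<open>Elements with a positive specialization are closed under subtraction-free rational
  operations; this is the form in which the Q-system recursion preserves the property.\<close>

definition positive_at_ones :: "nat set \<Rightarrow> (nat \<Rightarrow> 'a::field) \<Rightarrow> 'a \<Rightarrow> bool" where
  "positive_at_ones I x y \<longleftrightarrow> (\<exists>s>0. specializes I x y s)"

lemma positive_at_ones_exchange:
  assumes indep: "alg_indep I x"
    and "positive_at_ones I x a" "positive_at_ones I x b" "positive_at_ones I x c"
    and "positive_at_ones I x d"
  shows "positive_at_ones I x ((a * a + b * c) / d)"
proof -
  obtain sa sb sc sd where pos: "sa > 0" "sb > 0" "sc > 0" "sd > 0"
    and "specializes I x a sa" "specializes I x b sb" "specializes I x c sc" "specializes I x d sd"
    using assms(2-5) unfolding positive_at_ones_def by blast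
  then have "specializes I x ((a * a + b * c) / d) ((sa * sa + sb * sc) / sd)"
    by (intro specializes_div[OF indep] specializes_add specializes_mult) simp_all
  moreover have "(sa * sa + sb * sc) / sd > 0" using pos by (simp add: add_pos_pos)
  ultimately show ?thesis unfolding positive_at_ones_def by blast
qed

section \<open>Positive solutions of the Q-system\<close>

text \<open>A rational solution of the \<open>A\<^sub>r\<close> Q-system with positive values, trivial boundary rows and
  flat initial data \<open>S\<^sub>\<alpha>\<^sub>,\<^sub>0 = S\<^sub>\<alpha>\<^sub>,\<^sub>1\<close>; the specialization of \<open>R\<close> at \<open>x\<^sub>0 = (1, \<dots>, 1)\<close> is one.\<close>

locale positive_Q_solution =
  fixes r :: nat and S :: "nat \<Rightarrow> int \<Rightarrow> rat"
  assumes positive: "\<alpha> \<le> r + 1 \<Longrightarrow> S \<alpha> n > 0"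
    and exchange: "\<alpha> \<in> {1..r} \<Longrightarrow>
      S \<alpha> (n + 1) * S \<alpha> (n - 1) = (S \<alpha> n)\<^sup>2 + S (\<alpha> + 1) n * S (\<alpha> - 1) n"
    and boundary: "S 0 n = 1" "S (r + 1) n = 1"
    and flat_start: "\<alpha> \<in> {1..r} \<Longrightarrow> S \<alpha> 0 = S \<alpha> 1"
begin

text \<open>Flat initial data make the solution symmetric under \<open>n \<mapsto> 1 - n\<close>: the recursion run
  backwards from \<open>(S\<^sub>1, S\<^sub>0)\<close> is the recursion run forwards from \<open>(S\<^sub>0, S\<^sub>1)\<close>.\<close>

lemma reflection:
  assumes "\<alpha> \<le> r + 1"
  shows "S \<alpha> n = S \<alpha> (1 - n)"
proof -
  have "\<forall>\<beta>\<le>r+1. S \<beta> (int k) = S \<beta> (1 - int k) \<and> S \<beta> (- int k) = S \<beta> (int k + 1)" for k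
  proof (induction k)
    case 0
    show ?case
    proof (intro allI impI)
      fix \<beta> :: nat assume "\<beta> \<le> r + 1"
      then consider "\<beta> = 0" | "\<beta> \<in> {1..r}" | "\<beta> = r + 1" by fastforce
      then show "S \<beta> (int 0) = S \<beta> (1 - int 0) \<and> S \<beta> (- int 0) = S \<beta> (int 0 + 1)"
        using boundary flat_start by cases auto
    qed
  next
    case (Suc k)
    have forward: "S \<beta> (int k + 2) = S \<beta> (- int k - 1)" if "\<beta> \<le> r + 1" for \<beta>
    proof (cases "\<beta> \<in> {1..r}")
      case True
      have "S \<beta> (int k + 2) * S \<beta> (int k) = (S \<beta> (int k + 1))\<^sup>2
              + S (\<beta> + 1) (int k + 1) * S (\<beta> - 1) (int k + 1)"
        using exchange[OF True, of "int k + 1"] by (simp add: add.assoc)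
      also have "\<dots> = (S \<beta> (- int k))\<^sup>2 + S (\<beta> + 1) (- int k) * S (\<beta> - 1) (- int k)"
        using Suc.IH True by auto
      also have "\<dots> = S \<beta> (- int k - 1) * S \<beta> (int k)"
        using exchange[OF True, of "- int k"] Suc.IH True by (simp add: mult.commute)
      finally show ?thesis using positive[OF that, of "int k"] by simp
    next
      case False
      with that have "\<beta> = 0 \<or> \<beta> = r + 1" by auto
      then show ?thesis using boundary by auto
    qed
    show ?case
    proof (intro allI impI conjI)
      fix \<beta> :: nat assume "\<beta> \<le> r + 1"
      show "S \<beta> (int (Suc k)) = S \<beta> (1 - int (Suc k))"
        using Suc.IH \<open>\<beta> \<le> r + 1\<close> by (simp add: add.commute)
      show "S \<beta> (- int (Suc k)) = S \<beta> (int (Suc k) + 1)"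
      proof -
        have shift: "- int (Suc k) = - int k - 1" "int (Suc k) + 1 = int k + 2" by simp_all
        show ?thesis by (simp only: shift forward[OF \<open>\<beta> \<le> r + 1\<close>])
      qed
    qed
  qed
  moreover obtain k where "n = int k \<or> n = - int k"
    by (cases n rule: int_cases2) auto
  ultimately show ?thesis using assms by (auto simp: add.commute)
qed

text \<open>Away from the symmetry point the solution grows strictly: \<open>S\<^sub>n\<^sub>+\<^sub>1 S\<^sub>n\<^sub>-\<^sub>1 > S\<^sub>n\<^sup>2\<close>.\<close>

lemma increasing:
  assumes \<alpha>: "\<alpha> \<in> {1..r}" and "1 \<le> n"
  shows "S \<alpha> n < S \<alpha> (n + 1)"
  using \<open>1 \<le> n\<close>
proof (induction n rule: int_ge_induct)
  have grow: "S \<alpha> (m + 1) < S \<alpha> (m + 2)" if "S \<alpha> m \<le> S \<alpha> (m + 1)" for m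
  proof -
    have "\<alpha> \<le> r + 1" "\<alpha> + 1 \<le> r + 1" "\<alpha> - 1 \<le> r + 1" using \<alpha> by auto
    then have "S (\<alpha> + 1) (m + 1) * S (\<alpha> - 1) (m + 1) > 0" "S \<alpha> m > 0" "S \<alpha> (m + 1) > 0"
      using positive by auto
    moreover have "S \<alpha> (m + 2) * S \<alpha> m = (S \<alpha> (m + 1))\<^sup>2 + S (\<alpha> + 1) (m + 1) * S (\<alpha> - 1) (m + 1)"
      using exchange[OF \<alpha>, of "m + 1"] by (simp add: add.assoc)
    moreover have "S \<alpha> (m + 1) * S \<alpha> m \<le> (S \<alpha> (m + 1))\<^sup>2"
      using that \<open>S \<alpha> (m + 1) > 0\<close> by (simp add: power2_eq_square)
    ultimately have "S \<alpha> (m + 1) * S \<alpha> m < S \<alpha> (m + 2) * S \<alpha> m" by linarith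
    then show ?thesis using \<open>S \<alpha> m > 0\<close> by simp
  qed
  {
    case base
    show ?case using grow[of 0] flat_start[OF \<alpha>] by simp
  next
    case (step n)
    then show ?case using grow[of n] by (simp add: add.assoc)
  }
qed

lemma strictly_increasing:
  assumes "\<alpha> \<in> {1..r}" "1 \<le> c" "c < e"
  shows "S \<alpha> c < S \<alpha> e"
proof -
  have "S \<alpha> c < S \<alpha> (c + 1 + int d)" for d
  proof (induction d)
    case 0
    then show ?case using increasing assms by simp
  next
    case (Suc d)
    then show ?case using increasing[OF assms(1), of "c + 1 + int d"] assms(2)
      by (simp add: add.assoc)
  qed
  from this[of "nat (e - c - 1)"] show ?thesis using assms(3) by simp
qed

lemma parity_injective:
  assumes \<alpha>: "\<alpha> \<in> {1..r}" and eq: "S \<alpha> a = S \<alpha> b" and "even (a - b)"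
  shows "a = b"
proof -
  define fold :: "int \<Rightarrow> int" where "fold c = (if 1 \<le> c then c else 1 - c)" for c
  have fold_ge: "1 \<le> fold c" for c by (simp add: fold_def)
  have S_fold: "S \<alpha> (fold c) = S \<alpha> c" for c
    using reflection[of \<alpha> c] \<alpha> by (simp add: fold_def)
  have "fold a = fold b"
  proof (rule ccontr)
    assume "fold a \<noteq> fold b"
    then consider "fold a < fold b" | "fold b < fold a" by linarith
    then show False
      using strictly_increasing[OF \<alpha> fold_ge] eq S_fold by cases (metis less_irrefl)+
  qed
  then show "a = b" using \<open>even (a - b)\<close> unfolding fold_def by (auto split: if_splits; presburger)
qed

end

lemma Q_system_exchange:
  "is_Q_system r R \<Longrightarrow> \<alpha> \<in> {1..r} \<Longrightarrow>
     R \<alpha> (n + 1) * R \<alpha> (n - 1) = R \<alpha> n * R \<alpha> n + R (\<alpha> + 1) n * R (\<alpha> - 1) n"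
  unfolding is_Q_system_def by (simp add: power2_eq_square)

lemma Q_system_boundary: "is_Q_system r R \<Longrightarrow> \<alpha> = 0 \<or> \<alpha> = r + 1 \<Longrightarrow> R \<alpha> n = 1"
  unfolding is_Q_system_def by auto

lemma initial_cluster_entries:
  "\<alpha> \<in> {1..r} \<Longrightarrow> motzkin_cluster r R (\<lambda>_. 0) \<alpha> = R \<alpha> 0"
  "\<alpha> \<in> {1..r} \<Longrightarrow> motzkin_cluster r R (\<lambda>_. 0) (\<alpha> + r) = R \<alpha> 1"
  unfolding motzkin_cluster_def by auto

text \<open>Every \<open>R\<^sub>\<alpha>\<^sub>,\<^sub>n\<close> is a subtraction-free rational function of the initial cluster, hence
  specializes to a positive rational number at \<open>x\<^sub>0 = (1, \<dots>, 1)\<close>.  Induction on \<open>n\<close> in both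
  directions, solving the exchange relation for \<open>R\<^sub>\<alpha>\<^sub>,\<^sub>n\<^sub>+\<^sub>2\<close> resp. \<open>R\<^sub>\<alpha>\<^sub>,\<^sub>n\<^sub>-\<^sub>1\<close>.\<close>

lemma Q_system_positive_at_ones:
  fixes R :: "nat \<Rightarrow> int \<Rightarrow> 'a::field"
  assumes Q: "is_Q_system r R" and indep: "alg_indep {1..2*r} (motzkin_cluster r R (\<lambda>_. 0))"
    and "\<gamma> \<le> r + 1"
  shows "positive_at_ones {1..2*r} (motzkin_cluster r R (\<lambda>_. 0)) (R \<gamma> n)"
proof -
  let ?pos = "positive_at_ones {1..2*r} (motzkin_cluster r R (\<lambda>_. 0))"
  have boundary: "?pos (R \<gamma> m)" if "\<gamma> = 0 \<or> \<gamma> = r + 1" for \<gamma> m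
    unfolding positive_at_ones_def Q_system_boundary[OF Q that] using specializes_one by force
  have initial: "?pos (R \<gamma> 0) \<and> ?pos (R \<gamma> 1)" if "\<gamma> \<in> {1..r}" for \<gamma>
  proof -
    have "\<gamma> \<in> {1..2*r}" "\<gamma> + r \<in> {1..2*r}" using that by auto
    then show ?thesis unfolding positive_at_ones_def initial_cluster_entries[OF that, symmetric]
      using specializes_var zero_less_one by blast
  qed
  define row_pos where "row_pos m \<longleftrightarrow> (\<forall>\<beta>\<in>{1..r}. ?pos (R \<beta> m))" for m
  have row: "?pos (R \<beta> m)" if "row_pos m" "\<beta> \<le> r + 1" for \<beta> m
  proof (cases "\<beta> \<in> {1..r}")
    case False
    with \<open>\<beta> \<le> r + 1\<close> have "\<beta> = 0 \<or> \<beta> = r + 1" by auto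
    then show ?thesis by (rule boundary)
  qed (use that in \<open>auto simp: row_pos_def\<close>)
  have solve: "?pos c" if \<gamma>: "\<gamma> \<in> {1..r}" and "row_pos a" "row_pos b"
    and rel: "c * R \<gamma> a = R \<gamma> b * R \<gamma> b + R (\<gamma> + 1) b * R (\<gamma> - 1) b" for \<gamma> a b c
  proof -
    have "\<gamma> \<le> r + 1" "\<gamma> + 1 \<le> r + 1" "\<gamma> - 1 \<le> r + 1" using \<gamma> by auto
    then have pos: "?pos (R \<gamma> a)" "?pos (R \<gamma> b)" "?pos (R (\<gamma> + 1) b)" "?pos (R (\<gamma> - 1) b)"
      using row that(2,3) by blast+
    obtain s where "s > 0" "specializes {1..2*r} (motzkin_cluster r R (\<lambda>_. 0)) (R \<gamma> a) s"
      using pos(1) unfolding positive_at_ones_def by blast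
    then have "R \<gamma> a \<noteq> 0" using specializes_nonzero[OF indep] by simp
    then have "c = (R \<gamma> b * R \<gamma> b + R (\<gamma> + 1) b * R (\<gamma> - 1) b) / R \<gamma> a"
      using rel by (simp add: field_simps)
    then show ?thesis using positive_at_ones_exchange[OF indep pos(2-4,1)] by simp
  qed
  have "row_pos m \<and> row_pos (m + 1)" for m
  proof (induction m rule: int_induct[where k = 0])
    case base
    show ?case using initial by (simp add: row_pos_def)
  next
    case (step1 m)
    have "?pos (R \<beta> (m + 1 + 1))" if "\<beta> \<in> {1..r}" for \<beta>
      using Q_system_exchange[OF Q that, of "m + 1"] step1(2)
      by (intro solve[OF that, of m "m + 1"]) (simp_all add: mult.commute)
    then show ?case using step1(2) by (simp add: row_pos_def)
  next
    case (step2 m)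
    have "?pos (R \<beta> (m - 1))" if "\<beta> \<in> {1..r}" for \<beta>
      using Q_system_exchange[OF Q that, of m] step2(2)
      by (intro solve[OF that, of "m + 1" m]) (simp_all add: mult.commute)
    then show ?case using step2(2) by (simp add: row_pos_def)
  qed
  then show ?thesis using row \<open>\<gamma> \<le> r + 1\<close> by blast
qed

text \<open>Specializing at \<open>x\<^sub>0 = (1, \<dots>, 1)\<close> therefore yields a positive Q-system solution, whose
  injectivity on each parity class lifts to \<open>R\<close>.\<close>

lemma Q_system_parity_injective:
  fixes R :: "nat \<Rightarrow> int \<Rightarrow> 'a::field"
  assumes Q: "is_Q_system r R" and indep: "alg_indep {1..2*r} (motzkin_cluster r R (\<lambda>_. 0))"
    and \<alpha>: "\<alpha> \<in> {1..r}" and eq: "R \<alpha> a = R \<alpha> b" and "even (a - b)"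
  shows "a = b"
proof -
  let ?I = "{1..2*r}" and ?x = "motzkin_cluster r R (\<lambda>_. 0)"
  define S where "S \<gamma> n = (THE s. specializes ?I ?x (R \<gamma> n) s)" for \<gamma> n
  have S: "specializes ?I ?x (R \<gamma> n) (S \<gamma> n) \<and> S \<gamma> n > 0" if \<gamma>: "\<gamma> \<le> r + 1" for \<gamma> n
  proof -
    obtain s where s: "s > 0" "specializes ?I ?x (R \<gamma> n) s"
      using Q_system_positive_at_ones[OF Q indep \<gamma>] unfolding positive_at_ones_def by blast
    moreover have "S \<gamma> n = s"
      unfolding S_def using s(2) specializes_unique[OF indep] by blast
    ultimately show ?thesis by simp
  qed
  have S_eq: "S \<gamma> n = t" if "\<gamma> \<le> r + 1" "specializes ?I ?x (R \<gamma> n) t" for \<gamma> n t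
    using specializes_unique[OF indep] S that by blast
  interpret positive_Q_solution r S
  proof
    fix \<gamma> n
    show "\<gamma> \<le> r + 1 \<Longrightarrow> S \<gamma> n > 0" using S by blast
    show "S 0 n = 1" "S (r + 1) n = 1"
      using S_eq[of 0 n 1] S_eq[of "r + 1" n 1] Q_system_boundary[OF Q] specializes_one by auto
    assume \<gamma>: "\<gamma> \<in> {1..r}"
    then have "\<gamma> \<le> r + 1" "\<gamma> + 1 \<le> r + 1" "\<gamma> - 1 \<le> r + 1" by auto
    then have "specializes ?I ?x (R \<gamma> n * R \<gamma> n + R (\<gamma> + 1) n * R (\<gamma> - 1) n)
                 (S \<gamma> n * S \<gamma> n + S (\<gamma> + 1) n * S (\<gamma> - 1) n)"
      using S by (intro specializes_add specializes_mult) auto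
    moreover have "specializes ?I ?x (R \<gamma> (n + 1) * R \<gamma> (n - 1)) (S \<gamma> (n + 1) * S \<gamma> (n - 1))"
      using S \<open>\<gamma> \<le> r + 1\<close> by (intro specializes_mult) auto
    ultimately show "S \<gamma> (n + 1) * S \<gamma> (n - 1) = (S \<gamma> n)\<^sup>2 + S (\<gamma> + 1) n * S (\<gamma> - 1) n"
      using Q_system_exchange[OF Q \<gamma>, of n] specializes_unique[OF indep]
      by (metis power2_eq_square)
    have "\<gamma> \<in> ?I" "\<gamma> + r \<in> ?I" using \<gamma> by auto
    then show "S \<gamma> 0 = S \<gamma> 1"
      using S_eq[OF \<open>\<gamma> \<le> r + 1\<close>] specializes_var initial_cluster_entries[OF \<gamma>] by metis
  qed
  have "S \<alpha> a = S \<alpha> b" using S_eq S eq \<alpha> by simp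
  then show "a = b" using parity_injective[OF \<alpha> _ \<open>even (a - b)\<close>] by blast
qed

section \<open>Mutating sign matrices\<close>

definition sign :: "bool \<Rightarrow> int" where
  "sign b = (if b then 1 else -1)"

definition sign_matrix :: "nat \<Rightarrow> (nat \<Rightarrow> bool) \<Rightarrow> (nat \<Rightarrow> bool) \<Rightarrow> nat \<Rightarrow> nat \<Rightarrow> int" where
  "sign_matrix r f g p q =
     (if p \<le> r \<and> q \<le> r then sign (g q) * (sign (f p) - sign (f q)) * kdelta1 p q
      else if p \<le> r then - sign (g p) * sign (f (q - r)) * cartan p (q - r)
      else if q \<le> r then sign (f (p - r)) * sign (g q) * cartan (p - r) q
      else sign (f (p - r)) * (sign (g (q - r)) - sign (g (p - r))) * kdelta1 (p - r) (q - r))"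

text \<open>The situation of a Q-system mutation raising \<open>m\<^sub>\<alpha>\<close>: the sign vectors change only at \<open>\<alpha>\<close>, by
  \<open>(f\<^sub>\<alpha>, g\<^sub>\<alpha>) \<mapsto> (g\<^sub>\<alpha>, -f\<^sub>\<alpha>)\<close>; the mutated index is \<open>\<alpha>\<close> when \<open>f\<^sub>\<alpha> = g\<^sub>\<alpha>\<close> (\<open>m\<^sub>\<alpha>\<close> even) and \<open>\<alpha> + r\<close>
  otherwise; and neighbouring indices never flip both signs (the Motzkin condition).\<close>

locale sign_mutation =
  fixes r \<alpha> k :: nat and f g f' g' :: "nat \<Rightarrow> bool"
  assumes \<alpha>: "\<alpha> \<in> {1..r}"
    and unchanged: "\<And>\<beta>. \<beta> \<in> {1..r} \<Longrightarrow> \<beta> \<noteq> \<alpha> \<Longrightarrow> f' \<beta> = f \<beta> \<and> g' \<beta> = g \<beta>"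
    and new: "f' \<alpha> = g \<alpha>" "g' \<alpha> = (\<not> f \<alpha>)"
    and k: "k = (if f \<alpha> = g \<alpha> then \<alpha> else \<alpha> + r)"
    and adjacent: "\<And>\<beta>. 1 \<le> \<beta> \<Longrightarrow> \<beta> < r \<Longrightarrow> f (\<beta> + 1) = f \<beta> \<or> g (\<beta> + 1) = g \<beta>"
    and adjacent': "\<And>\<beta>. 1 \<le> \<beta> \<Longrightarrow> \<beta> < r \<Longrightarrow> f' (\<beta> + 1) = f' \<beta> \<or> g' (\<beta> + 1) = g' \<beta>"
begin

lemma neighbour:
  assumes "\<beta> \<in> {1..r}"
  shows "\<beta> = \<alpha> + 1 \<Longrightarrow> (f \<beta> = f \<alpha> \<or> g \<beta> = g \<alpha>) \<and> (f' \<beta> = f' \<alpha> \<or> g' \<beta> = g' \<alpha>)"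
    and "\<beta> + 1 = \<alpha> \<Longrightarrow> (f \<alpha> = f \<beta> \<or> g \<alpha> = g \<beta>) \<and> (f' \<alpha> = f' \<beta> \<or> g' \<alpha> = g' \<beta>)"
  using assms \<alpha> adjacent[of \<alpha>] adjacent'[of \<alpha>] adjacent[of \<beta>] adjacent'[of \<beta>] by auto

lemma position: "\<beta> = \<alpha> \<or> \<beta> = \<alpha> + 1 \<or> \<beta> + 1 = \<alpha> \<or> (\<beta> \<noteq> \<alpha> \<and> \<beta> \<noteq> \<alpha> + 1 \<and> \<beta> + 1 \<noteq> \<alpha>)"
  by auto

lemma direction: "(k = \<alpha> \<and> f \<alpha> = g \<alpha>) \<or> (k = \<alpha> + r \<and> f \<alpha> \<noteq> g \<alpha>)"
  using k by auto

text \<open>This is a finite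
  check, done block by block: after fixing the position of \<open>i\<close>, \<open>j\<close> relative to \<open>\<alpha>\<close> and the
  direction of \<open>k\<close>, every entry is a polynomial in a few signs.\<close>

lemma mutation_top_top:
  assumes "i \<in> {1..r}" "j \<in> {1..r}"
  shows "mutate_B k (sign_matrix r f g) i j = sign_matrix r f' g' i j"
  using position[of i] position[of j] direction assms [[simproc del: ring_eq_cancel_numeral_factor]]
  apply (elim disjE conjE)
  apply (insert \<alpha> new unchanged[OF assms(1)] unchanged[OF assms(2)] neighbour[OF assms(1)] neighbour[OF assms(2)])
  apply (simp_all add: mutate_B_def sign_matrix_def cartan_def kdelta1_def)
  apply (simp_all add: sign_def split: if_split)
  apply auto
  done

lemma mutation_top_bottom:
  assumes "i \<in> {1..r}" "j \<in> {1..r}"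
  shows "mutate_B k (sign_matrix r f g) i (j + r) = sign_matrix r f' g' i (j + r)"
  using position[of i] position[of j] direction assms [[simproc del: ring_eq_cancel_numeral_factor]]
  apply (elim disjE conjE)
  apply (insert \<alpha> new unchanged[OF assms(1)] unchanged[OF assms(2)] neighbour[OF assms(1)] neighbour[OF assms(2)])
  apply (simp_all add: mutate_B_def sign_matrix_def cartan_def kdelta1_def)
  apply (simp_all add: sign_def split: if_split)
  apply auto
  done

lemma mutation_bottom_top:
  assumes "i \<in> {1..r}" "j \<in> {1..r}"
  shows "mutate_B k (sign_matrix r f g) (i + r) j = sign_matrix r f' g' (i + r) j"
  using position[of i] position[of j] direction assms [[simproc del: ring_eq_cancel_numeral_factor]]
  apply (elim disjE conjE)
  apply (insert \<alpha> new unchanged[OF assms(1)] unchanged[OF assms(2)] neighbour[OF assms(1)] neighbour[OF assms(2)])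
  apply (simp_all add: mutate_B_def sign_matrix_def cartan_def kdelta1_def)
  apply (simp_all add: sign_def split: if_split)
  apply auto
  done

lemma mutation_bottom_bottom:
  assumes "i \<in> {1..r}" "j \<in> {1..r}"
  shows "mutate_B k (sign_matrix r f g) (i + r) (j + r) = sign_matrix r f' g' (i + r) (j + r)"
  using position[of i] position[of j] direction assms [[simproc del: ring_eq_cancel_numeral_factor]]
  apply (elim disjE conjE)
  apply (insert \<alpha> new unchanged[OF assms(1)] unchanged[OF assms(2)] neighbour[OF assms(1)] neighbour[OF assms(2)])
  apply (simp_all add: mutate_B_def sign_matrix_def cartan_def kdelta1_def)
  apply (simp_all add: sign_def split: if_split)
  apply auto
  done

lemma mutation_entry:
  assumes "p \<in> {1..2*r}" "q \<in> {1..2*r}"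
  shows "mutate_B k (sign_matrix r f g) p q = sign_matrix r f' g' p q"
proof -
  have split: "\<exists>i\<in>{1..r}. x = i \<or> x = i + r" if "x \<in> {1..2*r}" for x
  proof (cases "x \<le> r")
    case False
    then show ?thesis using that by (intro bexI[of _ "x - r"]) auto
  qed (use that in auto)
  obtain i j where "i \<in> {1..r}" "j \<in> {1..r}" "p = i \<or> p = i + r" "q = j \<or> q = j + r"
    using split[OF assms(1)] split[OF assms(2)] by blast
  then show ?thesis
    using mutation_top_top mutation_top_bottom mutation_bottom_top mutation_bottom_bottom by auto
qed

end

section \<open>The matrices \<open>B(M)\<close> under Q-system mutations\<close>

lemma neg1pow_sign: "neg1pow k = sign (even k)"
  by (simp add: neg1pow_def sign_def)

lemma sign_add_even: "sign (even (a + b)) = sign (even a) * sign (even b)"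
  by (simp add: sign_def)

lemma B_of_M_sign_matrix:
  "B_of_M r M = sign_matrix r (\<lambda>\<beta>. even (M \<beta> div 2)) (\<lambda>\<beta>. even ((M \<beta> + 1) div 2))"
  by (intro ext) (simp add: B_of_M_def sign_matrix_def Let_def neg1pow_sign sign_add_even,
      simp add: sign_def)

lemma half_parities_differ: "even (m div 2) = even ((m + 1) div 2) \<longleftrightarrow> even (m :: int)"
  by presburger

lemma half_parity_succ: "even ((m + 1 + 1) div 2) \<longleftrightarrow> \<not> even (m div 2)" for m :: int
  by presburger

lemma half_parities_adjacent:
  "\<bar>m' - m\<bar> \<le> 1 \<Longrightarrow> even (m' div 2) = even (m div 2) \<or> even ((m' + 1) div 2) = even ((m + 1) div 2)"
  for m m' :: int
  by presburger

text \<open>Raising \<open>m\<^sub>\<alpha>\<close> by one mutates \<open>B(M)\<close> at the slot holding the old \<open>R\<^sub>\<alpha>\<^sub>,\<^sub>m\<^sub>\<alpha>\<close>: slot \<open>\<alpha>\<close>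
  for even \<open>m\<^sub>\<alpha>\<close> and slot \<open>\<alpha> + r\<close> for odd \<open>m\<^sub>\<alpha>\<close>.\<close>

lemma B_of_M_mutation_up:
  assumes M: "motzkin r M" and M': "motzkin r M'" and \<alpha>: "\<alpha> \<in> {1..r}"
    and upd: "\<forall>\<beta>\<in>{1..r}. M' \<beta> = (if \<beta> = \<alpha> then M \<alpha> + 1 else M \<beta>)"
    and k: "k = (if even (M \<alpha>) then \<alpha> else \<alpha> + r)"
    and "p \<in> {1..2*r}" "q \<in> {1..2*r}"
  shows "mutate_B k (B_of_M r M) p q = B_of_M r M' p q"
proof -
  have adjacent: "even (N (\<beta> + 1) div 2) = even (N \<beta> div 2)
      \<or> even ((N (\<beta> + 1) + 1) div 2) = even ((N \<beta> + 1) div 2)"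
    if "motzkin r N" "1 \<le> \<beta>" "\<beta> < r" for N \<beta>
    using that half_parities_adjacent unfolding motzkin_def by blast
  have M'\<alpha>: "M' \<alpha> = M \<alpha> + 1" using upd \<alpha> by simp
  have "sign_mutation r \<alpha> k (\<lambda>\<beta>. even (M \<beta> div 2)) (\<lambda>\<beta>. even ((M \<beta> + 1) div 2))
      (\<lambda>\<beta>. even (M' \<beta> div 2)) (\<lambda>\<beta>. even ((M' \<beta> + 1) div 2))"
    by unfold_locales
      (use \<alpha> upd k M'\<alpha> half_parity_succ half_parities_differ adjacent[OF M] adjacent[OF M'] in auto)
  then show ?thesis
    unfolding B_of_M_sign_matrix using sign_mutation.mutation_entry assms(6,7) by blast
qed

lemma mutate_B_involutive: "mutate_B k (mutate_B k B) = B"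
  by (intro ext) (auto simp: mutate_B_def sgn_minus)

lemma mutate_B_cong:
  assumes "\<forall>p\<in>S. \<forall>q\<in>S. B p q = B' p q" "k \<in> S" "p \<in> S" "q \<in> S"
  shows "mutate_B k B p q = mutate_B k B' p q"
  using assms by (simp add: mutate_B_def)

text \<open>Lowering \<open>m\<^sub>\<alpha>\<close> is the inverse move, so it follows from \<open>B_of_M_mutation_up\<close> because mutations
  are involutions.\<close>

lemma B_of_M_mutation_down:
  assumes M: "motzkin r M" and M': "motzkin r M'" and \<alpha>: "\<alpha> \<in> {1..r}"
    and upd: "\<forall>\<beta>\<in>{1..r}. M' \<beta> = (if \<beta> = \<alpha> then M \<alpha> - 1 else M \<beta>)"
    and k: "k = (if odd (M \<alpha>) then \<alpha> else \<alpha> + r)"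
    and "p \<in> {1..2*r}" "q \<in> {1..2*r}"
  shows "mutate_B k (B_of_M r M) p q = B_of_M r M' p q"
proof -
  have upd': "\<forall>\<beta>\<in>{1..r}. M \<beta> = (if \<beta> = \<alpha> then M' \<alpha> + 1 else M' \<beta>)" and "M' \<alpha> = M \<alpha> - 1"
    using upd \<alpha> by auto
  then have k': "k = (if even (M' \<alpha>) then \<alpha> else \<alpha> + r)" using k by auto
  have "mutate_B k (B_of_M r M) p q = mutate_B k (mutate_B k (B_of_M r M')) p q"
    using B_of_M_mutation_up[OF M' M \<alpha> upd' k'] assms(6,7) k \<alpha>
    by (intro mutate_B_cong[where S = "{1..2*r}"]) auto
  then show ?thesis by (simp add: mutate_B_involutive)
qed

lemma motzkin_cluster_slots:
  assumes "\<alpha> \<in> {1..r}"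
  shows "motzkin_cluster r R N \<alpha> = R \<alpha> (if even (N \<alpha>) then N \<alpha> else N \<alpha> + 1)"
    and "motzkin_cluster r R N (\<alpha> + r) = R \<alpha> (if odd (N \<alpha>) then N \<alpha> else N \<alpha> + 1)"
  using assms by (auto simp: motzkin_cluster_def)

text \<open>Moving \<open>m\<^sub>\<alpha>\<close> by \<open>e = \<plusminus>1\<close> replaces, in one of the slots \<open>\<alpha>\<close>, \<open>\<alpha> + r\<close>, some \<open>R\<^sub>\<alpha>\<^sub>,\<^sub>a\<close>
  by \<open>R\<^sub>\<alpha>\<^sub>,\<^sub>a\<^sub>+\<^sub>2\<^sub>e\<close>, and these differ.  So the mutated index is forced to be that slot.\<close>

lemma Q_mutation_index:
  fixes R :: "nat \<Rightarrow> int \<Rightarrow> 'a::field"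
  assumes Q: "is_Q_system r R" and indep: "alg_indep {1..2*r} (motzkin_cluster r R (\<lambda>_. 0))"
    and \<alpha>: "\<alpha> \<in> {1..r}" and e: "e \<in> {1, -1}"
    and upd: "\<forall>\<beta>\<in>{1..r}. M' \<beta> = (if \<beta> = \<alpha> then M \<alpha> + e else M \<beta>)"
    and k: "k = \<alpha> \<or> k = \<alpha> + r"
    and unchanged: "\<forall>u\<in>{1..2*r}. u \<noteq> k \<longrightarrow> motzkin_cluster r R M' u = motzkin_cluster r R M u"
  shows "k = (if even (M \<alpha>) = (e = 1) then \<alpha> else \<alpha> + r)"
proof -
  define s where "s = (if even (M \<alpha>) = (e = 1) then \<alpha> else \<alpha> + r)"
  have "M' \<alpha> = M \<alpha> + e" using upd \<alpha> by simp
  then have "\<exists>a. motzkin_cluster r R M s = R \<alpha> a \<and> motzkin_cluster r R M' s = R \<alpha> (a + 2 * e)"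
    using e unfolding s_def
    by (intro exI[of _ "if e = 1 then M \<alpha> else M \<alpha> + 1"])
       (cases "even (M \<alpha>)"; auto simp: motzkin_cluster_slots[OF \<alpha>] algebra_simps)
  then obtain a where a: "motzkin_cluster r R M s = R \<alpha> a" "motzkin_cluster r R M' s = R \<alpha> (a + 2 * e)"
    by blast
  have "R \<alpha> (a + 2 * e) \<noteq> R \<alpha> a"
    using Q_system_parity_injective[OF Q indep \<alpha>, of "a + 2 * e" a] e by auto
  then have "motzkin_cluster r R M' s \<noteq> motzkin_cluster r R M s" using a by simp
  moreover have "s \<in> {1..2*r}" "s = \<alpha> \<or> s = \<alpha> + r" using \<alpha> by (auto simp: s_def)
  ultimately show ?thesis using unchanged k \<alpha> unfolding s_def[symmetric] by auto
qed

lemma Q_mutation_B_of_M: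
  fixes R :: "nat \<Rightarrow> int \<Rightarrow> 'a::field"
  assumes Q: "is_Q_system r R" and indep: "alg_indep {1..2*r} (motzkin_cluster r R (\<lambda>_. 0))"
    and M: "motzkin r M" and M': "motzkin r M'" and step: "Q_mutation_step r M M' k"
    and unchanged: "\<forall>u\<in>{1..2*r}. u \<noteq> k \<longrightarrow> motzkin_cluster r R M' u = motzkin_cluster r R M u"
    and "p \<in> {1..2*r}" "q \<in> {1..2*r}"
  shows "mutate_B k (B_of_M r M) p q = B_of_M r M' p q"
proof -
  obtain \<alpha> e where \<alpha>: "\<alpha> \<in> {1..r}" and e: "e \<in> {1, -1}"
    and upd: "\<forall>\<beta>\<in>{1..r}. M' \<beta> = (if \<beta> = \<alpha> then M \<alpha> + e else M \<beta>)"
    and "k = \<alpha> \<or> k = \<alpha> + r"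
    using step unfolding Q_mutation_step_def by blast
  then have k: "k = (if even (M \<alpha>) = (e = 1) then \<alpha> else \<alpha> + r)"
    using Q_mutation_index[OF Q indep \<alpha> e upd _ unchanged] by blast
  show ?thesis
  proof (cases "e = 1")
    case True
    then show ?thesis using B_of_M_mutation_up[OF M M' \<alpha> _ _ assms(7,8)] upd k by simp
  next
    case False
    then have "e = -1" using e by simp
    then show ?thesis using B_of_M_mutation_down[OF M M' \<alpha> _ _ assms(7,8)] upd k by simp
  qed
qed

text \<open>The cluster \<open>x\<^sub>M\<close> determines the Motzkin path: slot \<open>\<alpha>\<close> pins down the even and slot \<open>\<alpha> + r\<close>
  the odd one of \<open>m\<^sub>\<alpha>\<close>, \<open>m\<^sub>\<alpha> + 1\<close>.\<close>

lemma motzkin_cluster_determines_path: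
  fixes R :: "nat \<Rightarrow> int \<Rightarrow> 'a::field"
  assumes Q: "is_Q_system r R" and indep: "alg_indep {1..2*r} (motzkin_cluster r R (\<lambda>_. 0))"
    and eq: "\<forall>i\<in>{1..2*r}. motzkin_cluster r R M i = motzkin_cluster r R M' i"
  shows "\<forall>\<beta>\<in>{1..r}. M \<beta> = M' \<beta>"
proof
  fix \<beta> assume \<beta>: "\<beta> \<in> {1..r}"
  have "\<beta> \<in> {1..2*r}" "\<beta> + r \<in> {1..2*r}" using \<beta> by auto
  then have "R \<beta> (if even (M \<beta>) then M \<beta> else M \<beta> + 1) = R \<beta> (if even (M' \<beta>) then M' \<beta> else M' \<beta> + 1)"
    and "R \<beta> (if odd (M \<beta>) then M \<beta> else M \<beta> + 1) = R \<beta> (if odd (M' \<beta>) then M' \<beta> else M' \<beta> + 1)"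
    using eq unfolding motzkin_cluster_slots[OF \<beta>, symmetric] by auto
  then have "(if even (M \<beta>) then M \<beta> else M \<beta> + 1) = (if even (M' \<beta>) then M' \<beta> else M' \<beta> + 1)"
    and "(if odd (M \<beta>) then M \<beta> else M \<beta> + 1) = (if odd (M' \<beta>) then M' \<beta> else M' \<beta> + 1)"
    by (auto elim!: Q_system_parity_injective[OF Q indep \<beta>])
  then show "M \<beta> = M' \<beta>" by presburger
qed

lemma B_of_M_cong:
  assumes "\<forall>\<beta>\<in>{1..r}. M \<beta> = M' \<beta>" "p \<in> {1..2*r}" "q \<in> {1..2*r}"
  shows "B_of_M r M p q = B_of_M r M' p q"
proof -
  have low: "M x = M' x" if "x \<in> {1..2*r}" "x \<le> r" for x using that assms(1) by auto
  have high: "M (x - r) = M' (x - r)" if "x \<in> {1..2*r}" "r < x" for x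
  proof -
    have "x - r \<in> {1..r}" using that by auto
    then show ?thesis using assms(1) by blast
  qed
  show ?thesis
    using low[OF assms(2)] high[OF assms(2)] low[OF assms(3)] high[OF assms(3)]
    by (auto simp: B_of_M_def Let_def)
qed

lemma B_of_M_zero: "B_of_M r (\<lambda>_. 0) = B0 r"
  by (intro ext) (simp add: B_of_M_def B0_def Let_def neg1pow_def)

lemma exchange_matrices_along_path:
  fixes R :: "nat \<Rightarrow> int \<Rightarrow> 'a::field"
  assumes Q: "is_Q_system r R" and indep: "alg_indep {1..2*r} (motzkin_cluster r R (\<lambda>_. 0))"
    and init: "\<forall>i\<in>{1..2*r}. \<forall>j\<in>{1..2*r}. Bs 0 i j = B_of_M r (Ms 0) i j"
    and step_B: "\<forall>t<N. Bs (Suc t) = mutate_B (ks t) (Bs t)"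
    and ks_range: "\<forall>t<N. ks t \<in> {1..2*r}"
    and paths: "\<forall>t\<le>N. motzkin r (Ms t)"
    and Qmut: "\<forall>t<N. Q_mutation_step r (Ms t) (Ms (Suc t)) (ks t)"
    and unchanged: "\<forall>t<N. \<forall>u\<in>{1..2*r}. u \<noteq> ks t \<longrightarrow>
                      motzkin_cluster r R (Ms (Suc t)) u = motzkin_cluster r R (Ms t) u"
  shows "t \<le> N \<Longrightarrow> \<forall>i\<in>{1..2*r}. \<forall>j\<in>{1..2*r}. Bs t i j = B_of_M r (Ms t) i j"
proof (induction t)
  case 0
  show ?case using init .
next
  case (Suc t)
  then have "t < N" by simp
  show ?case
  proof (intro ballI)
    fix i j assume ij: "i \<in> {1..2*r}" "j \<in> {1..2*r}"
    have "Bs (Suc t) i j = mutate_B (ks t) (B_of_M r (Ms t)) i j"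
      using step_B ks_range Suc ij \<open>t < N\<close> by (auto intro: mutate_B_cong[where S = "{1..2*r}"])
    also have "\<dots> = B_of_M r (Ms (Suc t)) i j"
      using paths Qmut unchanged \<open>t < N\<close> ij
      by (intro Q_mutation_B_of_M[OF Q indep]) auto
    finally show "Bs (Suc t) i j = B_of_M r (Ms (Suc t)) i j" .
  qed
qed

theorem mainTheorem12:
  fixes r :: nat
    and R :: "nat \<Rightarrow> int \<Rightarrow> 'a::field_char_0"
    and N :: nat
    and xs :: "nat \<Rightarrow> nat \<Rightarrow> 'a"
    and Bs :: "nat \<Rightarrow> nat \<Rightarrow> nat \<Rightarrow> int"
    and ks :: "nat \<Rightarrow> nat"
    and Ms :: "nat \<Rightarrow> nat \<Rightarrow> int"
    and M :: "nat \<Rightarrow> int"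
  assumes r_pos: "1 \<le> r"
    and Q: "is_Q_system r R"
    and indep: "alg_indep {1..2*r} (motzkin_cluster r R (\<lambda>_. 0))"
    and init_x: "\<forall>i\<in>{1..2*r}. xs 0 i = motzkin_cluster r R (\<lambda>_. 0) i"
    and init_B: "\<forall>i\<in>{1..2*r}. \<forall>j\<in>{1..2*r}. Bs 0 i j = B0 r i j"
    and ks_range: "\<forall>t<N. ks t \<in> {1..2*r}"
    and step_x: "\<forall>t<N. xs (Suc t) = mutate_x r (Bs t) (ks t) (xs t)"
    and step_B: "\<forall>t<N. Bs (Suc t) = mutate_B (ks t) (Bs t)"
    and paths: "\<forall>t\<le>N. motzkin r (Ms t) \<and> (\<forall>i\<in>{1..2*r}. xs t i = motzkin_cluster r R (Ms t) i)"
    and Qmut: "\<forall>t<N. Q_mutation_step r (Ms t) (Ms (Suc t)) (ks t)"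
    and M_motzkin: "motzkin r M"
    and final: "\<forall>i\<in>{1..2*r}. xs N i = motzkin_cluster r R M i"
  shows "\<forall>i\<in>{1..2*r}. \<forall>j\<in>{1..2*r}. Bs N i j = B_of_M r M i j"
proof -
  have "\<forall>\<beta>\<in>{1..r}. Ms 0 \<beta> = 0"
    using motzkin_cluster_determines_path[OF Q indep] paths init_x by auto
  then have init: "\<forall>i\<in>{1..2*r}. \<forall>j\<in>{1..2*r}. Bs 0 i j = B_of_M r (Ms 0) i j"
    using init_B B_of_M_cong[of r "Ms 0" "\<lambda>_. 0"] by (simp add: B_of_M_zero)
  have unchanged: "\<forall>t<N. \<forall>u\<in>{1..2*r}. u \<noteq> ks t \<longrightarrow>
                     motzkin_cluster r R (Ms (Suc t)) u = motzkin_cluster r R (Ms t) u"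
  proof (intro allI impI ballI)
    fix t u assume "t < N" "u \<in> {1..2*r}" "u \<noteq> ks t"
    then have "xs (Suc t) u = xs t u" using step_x by (simp add: mutate_x_def)
    then show "motzkin_cluster r R (Ms (Suc t)) u = motzkin_cluster r R (Ms t) u"
      using paths \<open>t < N\<close> \<open>u \<in> {1..2*r}\<close> by (metis Suc_leI less_imp_le)
  qed
  have "\<forall>i\<in>{1..2*r}. \<forall>j\<in>{1..2*r}. Bs N i j = B_of_M r (Ms N) i j"
    using exchange_matrices_along_path[OF Q indep init step_B ks_range _ Qmut unchanged] paths by blast
  moreover have "\<forall>\<beta>\<in>{1..r}. Ms N \<beta> = M \<beta>"
    using motzkin_cluster_determines_path[OF Q indep] paths final by auto
  ultimately show ?thesis using B_of_M_cong by metis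
qed

end
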